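(* Let $\mathfrak{X}=(X,\{R_0,R_1,R_2,R_3,R_4\})$ be a skew-symmetric $4$-class association scheme with $R_1^\top=R_2$ and $R_3^\top=R_4$, and suppose that the character table of $\mathfrak X$ is of type $1$ or of type $2$ (in the sense described in the context). Then for each $i\in\{1,2\}$ the digraph $(X,R_i\cup R_{i+2})$ has $5$ distinct eigenvalues.
   Context: An association scheme on a finite set $X$ is a partition of $X\times X$ into relations $R_0$ (diagonal), $R_1,\dots,R_d$ closed under transposition, with constant intersection numbers; skew-symmetric means $R_0$ is the only symmetric relation. Schemes with $\le4$ classes are commutative; the Bose–Mesner algebra (span of the $01$ adjacency matrices $A_i$) has primitive idempotents $E_j$ with $A_iE_j=p_i(j)E_j$, and the character table $P$ has $(j,i)$-entry $p_i(j)$. The symmetrization $\tilde{\mathfrak X}=(X,\{R_0,R_1\cup R_2,R_3\cup R_4\})$ is a $2$-class scheme; write its character table (rows $\tilde E_0,\tilde E_1,\tilde E_2$, columns $R_0,R_1\cup R_2,R_3\cup R_4$) as $(1,k_1,k_2)$, $(1,r_1,t_1)$, $(1,r_2,t_2)$, with multiplicities $1,m_1,m_2$ ($m_j=\operatorname{rank}\tilde E_j$), and $n=|X|=1+k_1+k_2$. It is known that the primitive idempotents $E_0,\dots,E_4$ of $\mathfrak X$ can be ordered so that the character table of $\mathfrak X$ (columns $A_0,\dots,A_4$) has rows $(1,k_1/2,k_1/2,k_2/2,k_2/2)$, $(1,\rho,\bar\rho,\tau,\bar\tau)$, $(1,\sigma,\bar\sigma,\omega,\bar\omega)$, $(1,\bar\sigma,\sigma,\bar\omega,\omega)$,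 $(1,\bar\rho,\rho,\bar\tau,\tau)$ with multiplicities $1,m_1/2,m_1/2,m_2/2,m_2/2$, and one of the following holds. Type 1: $\rho=r_1/2$, $\sigma=(r_2+\sqrt{-b})/2$, $\tau=(t_1+\sqrt{-z})/2$, $\omega=t_2/2$ with $b=nk_1/m_2$, $z=nk_2/m_1$. Type 2: $\rho=(r_1+\sqrt{-y})/2$, $\sigma=r_2/2$, $\tau=t_1/2$, $\omega=(t_2+\sqrt{-c})/2$ with $y=nk_1/m_1$, $c=nk_2/m_2$. Type 3: $\rho=(r_1+\sqrt{-y})/2$, $\tau=(t_1+\sqrt{-z})/2$, $\sigma=(r_2+\sqrt{-b})/2$, $\omega=(t_2-\sqrt{-c})/2$ with $b,c,y,z>0$. Eigenvalues of a digraph $(X,R)$ are those of its $01$ adjacency matrix. *)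

theory Defs
  imports "HOL-Analysis.Analysis"
begin

text \<open>The ground set X is the (finite, nonempty) universe of the type 'a.
  Relations are indexed by naturals; only indices 0..d matter.\<close>

definition adjm :: "('a::finite \<times> 'a) set \<Rightarrow> complex^'a^'a" where
  "adjm S = (\<chi> x y. if (x, y) \<in> S then 1 else 0)"

definition assoc_scheme :: "nat \<Rightarrow> (nat \<Rightarrow> ('a::finite \<times> 'a) set) \<Rightarrow> bool" where
  "assoc_scheme d R \<longleftrightarrow>
     R 0 = Id \<and>
     (\<forall>i\<le>d. R i \<noteq> {}) \<and>
     (\<forall>i\<le>d. \<forall>j\<le>d. i \<noteq> j \<longrightarrow> R i \<inter> R j = {}) \<and>
     (\<Union>i\<in>{..d}. R i) = UNIV \<and>
     (\<forall>i\<le>d. \<exists>j\<le>d. (R i)\<inverse> = R j) \<and>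
     (\<forall>i\<le>d. \<forall>j\<le>d. \<forall>h\<le>d. \<exists>p::nat. \<forall>x y. (x, y) \<in> R h \<longrightarrow>
         card {z. (x, z) \<in> R i \<and> (z, y) \<in> R j} = p)"

definition skew_symmetric :: "nat \<Rightarrow> (nat \<Rightarrow> ('a \<times> 'a) set) \<Rightarrow> bool" where
  "skew_symmetric d R \<longleftrightarrow> (\<forall>i\<in>{1..d}. (R i)\<inverse> \<noteq> R i)"

definition digraph_eigenvalues :: "('a::finite \<times> 'a) set \<Rightarrow> complex set" where
  "digraph_eigenvalues S = {c. \<exists>v. v \<noteq> 0 \<and> adjm S *v v = c *s v}"

text \<open>E 0,...,E 4 are the primitive idempotents of the Bose-Mesner algebra of a 4-class
  scheme R, with character table P (P j i = p_i(j)), i.e. they are nonzero pairwise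
  orthogonal idempotents summing to the identity with A_i E_j = p_i(j) E_j.\<close>
definition prim_idempotents_table ::
  "(nat \<Rightarrow> ('a::finite \<times> 'a) set) \<Rightarrow> (nat \<Rightarrow> complex^'a^'a) \<Rightarrow> (nat \<Rightarrow> nat \<Rightarrow> complex) \<Rightarrow> bool" where
  "prim_idempotents_table R E P \<longleftrightarrow>
     (\<forall>j\<le>4. E j \<noteq> 0) \<and>
     (\<forall>j\<le>4. \<forall>l\<le>4. E j ** E l = (if j = l then E j else 0)) \<and>
     (\<Sum>j\<le>4. E j) = mat 1 \<and>
     (\<forall>i\<le>4. \<forall>j\<le>4. adjm (R i) ** E j = mat (P j i) ** E j)"

text \<open>The character table of the 4-class scheme R has the shape described in the context
  (with the given ordering of the idempotents) and is of type 1 or of type 2.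
  Here k1,k2 are the valencies of R1 u R2 and R3 u R4, n = |X|,
  Et1 = E1 + E4 and Et2 = E2 + E3 are the primitive idempotents of the symmetrization,
  r1,t1 (resp. r2,t2) are the eigenvalues of A(R1 u R2), A(R3 u R4) on Et1 (resp. Et2),
  and m1 = rank Et1, m2 = rank Et2.\<close>
definition table_type_1_or_2 :: "(nat \<Rightarrow> ('a::finite \<times> 'a) set) \<Rightarrow> bool" where
  "table_type_1_or_2 R \<longleftrightarrow>
    (\<exists>E \<rho> \<sigma> \<tau> \<omega> (k1::real) (k2::real) (r1::real) (t1::real) (r2::real) (t2::real).
      let n = real CARD('a);
          Et1 = E 1 + E 4; Et2 = E 2 + E 3;
          m1 = real (rank Et1); m2 = real (rank Et2);
          P = (\<lambda>j i. [[1, of_real (k1/2), of_real (k1/2), of_real (k2/2), of_real (k2/2)],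
                      [1, \<rho>, cnj \<rho>, \<tau>, cnj \<tau>],
                      [1, \<sigma>, cnj \<sigma>, \<omega>, cnj \<omega>],
                      [1, cnj \<sigma>, \<sigma>, cnj \<omega>, \<omega>],
                      [1, cnj \<rho>, \<rho>, cnj \<tau>, \<tau>]] ! j ! i)
      in (\<forall>x. real (card {y. (x, y) \<in> R 1 \<union> R 2}) = k1) \<and>
         (\<forall>x. real (card {y. (x, y) \<in> R 3 \<union> R 4}) = k2) \<and>
         adjm (R 1 \<union> R 2) ** Et1 = mat (of_real r1) ** Et1 \<and>
         adjm (R 3 \<union> R 4) ** Et1 = mat (of_real t1) ** Et1 \<and>
         adjm (R 1 \<union> R 2) ** Et2 = mat (of_real r2) ** Et2 \<and>
         adjm (R 3 \<union> R 4) ** Et2 = mat (of_real t2) ** Et2 \<and>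
         prim_idempotents_table R E P \<and>
         ((\<rho> = of_real (r1 / 2) \<and>
           \<sigma> = (of_real r2 + \<i> * of_real (sqrt (n * k1 / m2))) / 2 \<and>
           \<tau> = (of_real t1 + \<i> * of_real (sqrt (n * k2 / m1))) / 2 \<and>
           \<omega> = of_real (t2 / 2))
          \<or>
          (\<rho> = (of_real r1 + \<i> * of_real (sqrt (n * k1 / m1))) / 2 \<and>
           \<sigma> = of_real (r2 / 2) \<and>
           \<tau> = of_real (t1 / 2) \<and>
           \<omega> = (of_real t2 + \<i> * of_real (sqrt (n * k2 / m2))) / 2)))"

end

theory Submission
  imports Defs
begin

(* The eigenvalues of A_i + A_(i+2) are the sums P_j(i) + P_j(i+2) of entries of the character
   table: the real number (k1 + k2)/2 and two conjugate pairs, whose imaginary parts are those of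
   tau and sigma (type 1), resp. of rho and omega (type 2).  Exchanging E1 with E2 and E3 with E4
   turns type 2 into type 1, so it suffices to show Im sigma ~= Im tau in type 1.  If both were
   s/2, the diagonal entries of (A1 +- A2)^2, (A3 +- A4)^2, I and J, expanded in the idempotents,
   would force s^2 = n = (2 rho + 2 omega + 1)^2.  But rho, omega and |sigma|^2 are integers,
   being eigenvalues of integer matrices acting on the integer matrices A1 - A2 and A3 - A4, so
   4 |sigma|^2 = (2 omega + 1)^2 + s^2 would be a sum of two odd squares divisible by 4. *)

lemma matrix_matrix_mult_entry: "(A ** B) $ i $ j = (\<Sum>k\<in>UNIV. A $ i $ k * B $ k $ j)"
  by (simp add: matrix_matrix_mult_def)

lemma mat_mult_entry [simp]: "(mat c ** M) $ i $ j = c * (M :: 'a::semiring_1^'n^'m) $ i $ j"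
proof -
  have "(mat c ** M) $ i $ j = (\<Sum>k\<in>UNIV. if k = i then c * M $ k $ j else 0)"
    unfolding matrix_matrix_mult_entry mat_def by (rule sum.cong) auto
  then show ?thesis by simp
qed

lemma mat_mult_mat: "mat a ** (mat b ** M) = mat (a * b) ** (M :: 'a::semiring_1^'n^'m)"
  by (simp add: vec_eq_iff mult.assoc)

lemma matrix_mult_mat_commute:
  "A ** (mat c ** B) = mat c ** (A ** (B :: 'a::comm_semiring_1^'n^'n))"
  by (simp add: vec_eq_iff matrix_matrix_mult_entry[of A] sum_distrib_left algebra_simps)

lemma mat_mult_add: "mat a ** M + mat b ** M = mat (a + b) ** (M :: 'a::semiring_1^'n^'m)"
  by (simp add: vec_eq_iff algebra_simps)

lemma mat_mult_diff: "mat a ** M - mat b ** M = mat (a - b) ** (M :: 'a::ring_1^'n^'m)"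
  by (simp add: vec_eq_iff algebra_simps)

lemma mat_mult_eq_0_iff:
  "mat c ** M = 0 \<longleftrightarrow> c = 0 \<or> (M :: 'a::{semiring_1,semiring_no_zero_divisors}^'n^'m) = 0"
  by (auto simp: vec_eq_iff)

lemma mat_mult_vector: "(mat a ** M) *v v = a *s (M *v v :: 'a::comm_semiring_1^'m)"
  by (simp add: vec_eq_iff matrix_vector_mult_def sum_distrib_left mult.assoc)

lemma matrix_vector_mult_scalar: "M *v (a *s v) = a *s (M *v v :: 'a::comm_semiring_1^'m)"
  by (simp add: vec_eq_iff matrix_vector_mult_def sum_distrib_left algebra_simps)

lemma matrix_add_rdistrib: "(A + B) ** (C :: 'a::semiring_1^'p^'n) = A ** C + B ** C"
  by (simp add: vec_eq_iff matrix_matrix_mult_entry sum.distrib[symmetric] algebra_simps)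

lemma matrix_sum_mult: "(\<Sum>j\<in>S. f j) ** (B :: 'a::semiring_1^'p^'n) = (\<Sum>j\<in>S. f j ** B)"
  by (induction S rule: infinite_finite_induct) (auto simp: matrix_add_rdistrib)

lemma matrix_mult_sum: "(B :: 'a::semiring_1^'n^'m) ** (\<Sum>j\<in>S. f j) = (\<Sum>j\<in>S. B ** f j)"
  by (induction S rule: infinite_finite_induct) (auto simp: matrix_add_ldistrib)

lemma matrix_sum_mult_vector: "(\<Sum>j\<in>S. f j) *v (v :: 'a::semiring_1^'n) = (\<Sum>j\<in>S. f j *v v)"
  by (induction S rule: infinite_finite_induct) (auto simp: matrix_vector_mult_add_rdistrib)

lemma rank_pos: "(A :: 'a::field^'n^'m) \<noteq> 0 \<Longrightarrow> rank A > 0"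
proof -
  assume "A \<noteq> 0"
  then obtain i where "row i A \<noteq> 0" by (auto simp: vec_eq_iff row_def)
  moreover have "row i A \<in> rows A" by (auto simp: rows_def)
  ultimately have "\<not> rows A \<subseteq> {0}" by auto
  then show ?thesis unfolding row_rank_def_gen using vec.dim_eq_0 by auto
qed

locale orthogonal_idempotents =
  fixes d :: nat and E :: "nat \<Rightarrow> 'a::field^'n^'n"
  assumes nonzero: "j \<le> d \<Longrightarrow> E j \<noteq> 0"
    and orthogonal: "j \<le> d \<Longrightarrow> l \<le> d \<Longrightarrow> E j ** E l = (if j = l then E j else 0)"
    and sum_eq_id: "(\<Sum>j\<le>d. E j) = mat 1"
begin

definition lincomb :: "(nat \<Rightarrow> 'a) \<Rightarrow> 'a^'n^'n" where
  "lincomb c = (\<Sum>j\<le>d. mat (c j) ** E j)"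

lemma lincomb_mult_idem: "l \<le> d \<Longrightarrow> lincomb c ** E l = mat (c l) ** E l"
proof -
  assume l: "l \<le> d"
  have "lincomb c ** E l = (\<Sum>j\<le>d. if j = l then mat (c l) ** E l else 0)"
    unfolding lincomb_def matrix_sum_mult matrix_mul_assoc[symmetric]
    by (rule sum.cong) (auto simp: orthogonal l)
  then show ?thesis using l by simp
qed

lemma idem_mult_lincomb: "l \<le> d \<Longrightarrow> E l ** lincomb c = mat (c l) ** E l"
proof -
  assume l: "l \<le> d"
  have "E l ** lincomb c = (\<Sum>j\<le>d. if j = l then mat (c l) ** E l else 0)"
    unfolding lincomb_def matrix_mult_sum matrix_mult_mat_commute
    by (rule sum.cong) (auto simp: orthogonal l)
  then show ?thesis using l by simp
qed

lemma lincomb_mult: "lincomb c ** lincomb c' = lincomb (\<lambda>j. c j * c' j)"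
proof -
  have "lincomb c ** lincomb c' = (\<Sum>j\<le>d. mat (c' j) ** (lincomb c ** E j))"
    unfolding lincomb_def[of c'] matrix_mult_sum matrix_mult_mat_commute ..
  also have "\<dots> = lincomb (\<lambda>j. c j * c' j)"
    unfolding lincomb_def[of "\<lambda>j. c j * c' j"]
    by (rule sum.cong) (auto simp: lincomb_mult_idem mat_mult_mat mult.commute)
  finally show ?thesis .
qed

lemma lincomb_add: "lincomb c + lincomb c' = lincomb (\<lambda>j. c j + c' j)"
  by (simp add: lincomb_def sum.distrib[symmetric] mat_mult_add)

lemma lincomb_diff: "lincomb c - lincomb c' = lincomb (\<lambda>j. c j - c' j)"
  by (simp add: lincomb_def sum_subtractf[symmetric] mat_mult_diff)

lemma mat_mult_lincomb: "mat a ** lincomb c = lincomb (\<lambda>j. a * c j)"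
  by (simp add: lincomb_def mat_mult_mat matrix_mult_sum)

lemma lincomb_one: "lincomb (\<lambda>_. 1) = mat 1"
  by (simp add: lincomb_def sum_eq_id)

lemma lincomb_zero: "lincomb (\<lambda>_. 0) = 0"
  by (simp add: lincomb_def)

lemma lincomb_sum: "(\<Sum>i\<in>I. lincomb (c i)) = lincomb (\<lambda>j. \<Sum>i\<in>I. c i j)"
  by (induction I rule: infinite_finite_induct) (simp_all add: lincomb_zero lincomb_add)

lemma lincomb_mult_commute: "lincomb c ** lincomb c' = lincomb c' ** lincomb c"
  by (simp add: lincomb_mult mult.commute)

lemma lincomb_cong: "(\<And>j. j \<le> d \<Longrightarrow> c j = c' j) \<Longrightarrow> lincomb c = lincomb c'"
  unfolding lincomb_def by (rule sum.cong) auto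

lemma lincomb_eqD: "lincomb c = lincomb c' \<Longrightarrow> l \<le> d \<Longrightarrow> c l = c' l"
proof -
  assume eq: "lincomb c = lincomb c'" and l: "l \<le> d"
  have "mat (c l - c' l) ** E l = 0"
    using lincomb_mult_idem[OF l, of c] lincomb_mult_idem[OF l, of c'] eq
    by (simp flip: mat_mult_diff)
  then show ?thesis using nonzero[OF l] by (simp add: mat_mult_eq_0_iff)
qed

lemma lincomb_diag: "lincomb c $ x $ x = (\<Sum>j\<le>d. c j * E j $ x $ x)"
  by (simp add: lincomb_def)

lemma eq_lincomb: "(\<And>j. j \<le> d \<Longrightarrow> A ** E j = mat (c j) ** E j) \<Longrightarrow> A = lincomb c"
proof -
  assume eigen: "\<And>j. j \<le> d \<Longrightarrow> A ** E j = mat (c j) ** E j"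
  have "A = (\<Sum>j\<le>d. A ** E j)" by (simp flip: matrix_mult_sum add: sum_eq_id)
  also have "\<dots> = lincomb c" unfolding lincomb_def by (rule sum.cong) (auto simp: eigen)
  finally show ?thesis .
qed

lemma eigenvalues_lincomb: "{\<mu>. \<exists>v. v \<noteq> 0 \<and> lincomb c *v v = \<mu> *s v} = c ` {..d}"
proof (intro equalityI subsetI)
  fix \<mu> assume "\<mu> \<in> c ` {..d}"
  then obtain j where j: "j \<le> d" "\<mu> = c j" by auto
  obtain x y where xy: "E j $ x $ y \<noteq> 0" using nonzero[OF j(1)] by (auto simp: vec_eq_iff)
  define v where "v = column y (E j)"
  have "(lincomb c *v v) $ i = (lincomb c ** E j) $ i $ y" for i
    by (simp add: v_def column_def matrix_vector_mult_def matrix_matrix_mult_def)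
  then have "lincomb c *v v = \<mu> *s v"
    by (simp add: lincomb_mult_idem j vec_eq_iff column_def v_def)
  moreover have "v \<noteq> 0" using xy by (auto simp: v_def vec_eq_iff column_def)
  ultimately show "\<mu> \<in> {\<mu>. \<exists>v. v \<noteq> 0 \<and> lincomb c *v v = \<mu> *s v}" by auto
next
  fix \<mu> assume "\<mu> \<in> {\<mu>. \<exists>v. v \<noteq> 0 \<and> lincomb c *v v = \<mu> *s v}"
  then obtain v where v: "v \<noteq> 0" "lincomb c *v v = \<mu> *s v" by auto
  have "(\<Sum>j\<le>d. E j *v v) \<noteq> 0" using v(1) by (simp flip: matrix_sum_mult_vector add: sum_eq_id)
  then obtain j where j: "j \<le> d" "E j *v v \<noteq> 0" by (metis atMost_iff sum.neutral)
  have "c j *s (E j *v v) = (E j ** lincomb c) *v v"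
    by (simp add: idem_mult_lincomb j mat_mult_vector)
  also have "\<dots> = \<mu> *s (E j *v v)"
    by (simp flip: matrix_vector_mul_assoc add: v(2) matrix_vector_mult_scalar)
  finally have "(c j - \<mu>) *s (E j *v v) = 0" by (simp add: vector_sub_rdistrib)
  then show "\<mu> \<in> c ` {..d}" using j by auto
qed

lemma add_nonzero: "j \<le> d \<Longrightarrow> l \<le> d \<Longrightarrow> j \<noteq> l \<Longrightarrow> E j + E l \<noteq> 0"
proof -
  assume jl: "j \<le> d" "l \<le> d" "j \<noteq> l"
  have "(E j + E l) ** E j = E j"
    using orthogonal[of j j] orthogonal[of l j] jl by (simp add: matrix_add_rdistrib)
  then show ?thesis using nonzero[OF jl(1)] by auto
qed

lemma reindex:
  assumes "bij_betw p {..d} {..d}"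
  shows "orthogonal_idempotents d (\<lambda>j. E (p j))"
proof
  have p: "j \<le> d \<Longrightarrow> p j \<le> d" for j using bij_betwE[OF assms] by auto
  have inj: "j \<le> d \<Longrightarrow> l \<le> d \<Longrightarrow> p j = p l \<longleftrightarrow> j = l" for j l
    using bij_betw_imp_inj_on[OF assms] by (auto dest: inj_onD)
  show "E (p j) \<noteq> 0" if "j \<le> d" for j using nonzero p that by blast
  show "E (p j) ** E (p l) = (if j = l then E (p j) else 0)" if "j \<le> d" "l \<le> d" for j l
    using orthogonal[OF p p] inj that by simp
  show "(\<Sum>j\<le>d. E (p j)) = mat 1"
    using sum.reindex_bij_betw[OF assms, of E] sum_eq_id by simp
qed

end

lemma card_eq_sum_indicator:
  "(\<Sum>z\<in>UNIV. if P z then 1 else 0) = (of_nat (card {z::'a::finite. P z}) :: 'b::semiring_1)"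
proof -
  have "(\<Sum>z\<in>UNIV. if P z then 1 else 0) = (\<Sum>z\<in>UNIV. of_bool (P z) :: 'b)"
    by (rule sum.cong) auto
  then show ?thesis by simp
qed

definition integral_matrix :: "'a::ring_1^'n^'m \<Rightarrow> bool" where
  "integral_matrix M \<longleftrightarrow> (\<forall>i j. M $ i $ j \<in> \<int>)"

lemma integral_matrix_diff: "integral_matrix A \<Longrightarrow> integral_matrix B \<Longrightarrow> integral_matrix (A - B)"
  by (simp add: integral_matrix_def)

lemma integral_matrix_mult:
  "integral_matrix A \<Longrightarrow> integral_matrix (B :: 'a::comm_ring_1^'n^'m) \<Longrightarrow> integral_matrix (A ** B)"
  unfolding integral_matrix_def matrix_matrix_mult_entry by (auto intro!: Ints_sum Ints_mult)

lemma eigenvalue_Ints: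
  fixes M :: "'a::comm_ring_1^'n^'n"
  assumes "integral_matrix M" "integral_matrix S" "S $ x $ y = 1" "M ** S = mat \<mu> ** S"
  shows "\<mu> \<in> \<int>"
proof -
  have "\<mu> = (M ** S) $ x $ y" using assms(3,4) by simp
  then show ?thesis using integral_matrix_mult[OF assms(1,2)] by (simp add: integral_matrix_def)
qed

lemma ones_mult_skew_eq_0:
  fixes S J :: "'a::field_char_0^'n^'n"
  assumes "transpose S = - S" and "J ** S = S ** J" and "\<And>x y. J $ x $ y = 1"
  shows "J ** S = 0"
proof -
  have col: "(J ** S) $ x $ y = (\<Sum>z\<in>UNIV. S $ z $ y)" for x y
    by (simp add: matrix_matrix_mult_entry assms(3))
  have row: "(S ** J) $ x $ y = (\<Sum>z\<in>UNIV. S $ x $ z)" for x y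
    by (simp add: matrix_matrix_mult_entry assms(3))
  have skew: "S $ z $ y = - S $ y $ z" for y z
    using arg_cong[OF assms(1), of "\<lambda>M. M $ y $ z"] by (simp add: transpose_def)
  have "(\<Sum>z\<in>UNIV. S $ z $ y) = 0" for y
  proof -
    have "(\<Sum>z\<in>UNIV. S $ z $ y) = (\<Sum>z\<in>UNIV. S $ y $ z)"
      using col[of y y] row[of y y] assms(2) by simp
    moreover have "(\<Sum>z\<in>UNIV. S $ z $ y) = - (\<Sum>z\<in>UNIV. S $ y $ z)"
      unfolding sum_negf[symmetric] by (rule sum.cong) (auto intro: skew)
    ultimately show ?thesis by simp
  qed
  then show ?thesis by (simp add: vec_eq_iff col)
qed

lemma adjm_entry [simp]: "adjm S $ x $ y = (if (x, y) \<in> S then 1 else 0)"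
  by (simp add: adjm_def)

lemma adjm_Un: "R \<inter> S = {} \<Longrightarrow> adjm (R \<union> S) = adjm R + adjm S"
  by (auto simp: vec_eq_iff)

lemma integral_matrix_adjm: "integral_matrix (adjm S)"
  by (simp add: integral_matrix_def)

lemma adjm_symmetric_square_diag:
  assumes "R \<inter> R\<inverse> = {}"
  shows "((adjm R + adjm (R\<inverse>)) ** (adjm R + adjm (R\<inverse>))) $ x $ x
    = of_nat (card {y. (x, y) \<in> R \<union> R\<inverse>})"
proof -
  have "((adjm R + adjm (R\<inverse>)) ** (adjm R + adjm (R\<inverse>))) $ x $ x
      = (\<Sum>y\<in>UNIV. if (x, y) \<in> R \<union> R\<inverse> then 1 else 0)"
    unfolding matrix_matrix_mult_entry by (rule sum.cong) (use assms in auto)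
  then show ?thesis by (simp add: card_eq_sum_indicator)
qed

lemma adjm_skew_square_diag:
  assumes "R \<inter> R\<inverse> = {}"
  shows "((adjm R - adjm (R\<inverse>)) ** (adjm R - adjm (R\<inverse>))) $ x $ x
    = - of_nat (card {y. (x, y) \<in> R \<union> R\<inverse>})"
proof -
  have "((adjm R - adjm (R\<inverse>)) ** (adjm R - adjm (R\<inverse>))) $ x $ x
      = - (\<Sum>y\<in>UNIV. if (x, y) \<in> R \<union> R\<inverse> then 1 else 0)"
    unfolding matrix_matrix_mult_entry sum_negf[symmetric] by (rule sum.cong) (use assms in auto)
  then show ?thesis by (simp add: card_eq_sum_indicator)
qed

lemma assoc_scheme_Id: "assoc_scheme d R \<Longrightarrow> R 0 = Id"
  by (simp add: assoc_scheme_def)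

lemma assoc_scheme_nonempty: "assoc_scheme d R \<Longrightarrow> i \<le> d \<Longrightarrow> R i \<noteq> {}"
  by (simp add: assoc_scheme_def)

lemma assoc_scheme_disjoint:
  "assoc_scheme d R \<Longrightarrow> i \<le> d \<Longrightarrow> j \<le> d \<Longrightarrow> i \<noteq> j \<Longrightarrow> R i \<inter> R j = {}"
  by (simp add: assoc_scheme_def)

lemma assoc_scheme_cover: "assoc_scheme d R \<Longrightarrow> \<exists>i\<le>d. (x, y) \<in> R i"
  unfolding assoc_scheme_def by (metis UNIV_I UN_iff atMost_iff)

lemma assoc_scheme_sum_adjm:
  assumes "assoc_scheme d R"
  shows "(\<Sum>i\<le>d. adjm (R i)) $ x $ y = 1"
proof -
  obtain i where i: "i \<le> d" "(x, y) \<in> R i" using assoc_scheme_cover[OF assms] by blast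
  have "(x, y) \<notin> R l" if "l \<le> d" "l \<noteq> i" for l
    using assoc_scheme_disjoint[OF assms i(1) that(1)] that(2) i(2) by blast
  then have "(\<Sum>l\<le>d. adjm (R l) $ x $ y) = (\<Sum>l\<le>d. if l = i then 1 else 0)"
    by (intro sum.cong) (auto simp: i(2))
  then show ?thesis using i(1) by simp
qed

lemma assoc_scheme_valency_pos:
  assumes "assoc_scheme d R" "i \<le> d" "\<And>x. real (card {y. (x, y) \<in> R i \<union> R j}) = k"
  shows "k > 0"
proof -
  obtain x y where "(x, y) \<in> R i" using assoc_scheme_nonempty[OF assms(1,2)] by auto
  then have "card {y. (x, y) \<in> R i \<union> R j} > 0" by (auto simp: card_gt_0_iff)
  then show ?thesis using assms(3)[of x] by simp
qed

lemma odd_squares_sum_neq_4_mult: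
  fixes a b q :: int
  shows "(2*a + 1)^2 + (2*b + 1)^2 \<noteq> 4*q"
proof
  assume "(2*a + 1)^2 + (2*b + 1)^2 = 4*q"
  moreover have "(2*a + 1)^2 + (2*b + 1)^2 = 4*(a^2 + a + b^2 + b) + 2"
    by (simp add: power2_eq_square algebra_simps)
  ultimately show False by presburger
qed

lemma card_conjugate_pairs:
  fixes l0 l1 l2 :: complex
  assumes "Im l0 = 0" "Im l1 > 0" "Im l2 > 0" "Im l1 \<noteq> Im l2"
  shows "card {l0, l1, l2, cnj l2, cnj l1} = 5"
proof -
  have "l0 \<noteq> l1" "l0 \<noteq> l2" "l0 \<noteq> cnj l2" "l0 \<noteq> cnj l1" "l1 \<noteq> l2" "l1 \<noteq> cnj l2"
    "l1 \<noteq> cnj l1" "l2 \<noteq> cnj l2" "l2 \<noteq> cnj l1" "cnj l2 \<noteq> cnj l1"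
    using assms by (auto simp: complex_eq_iff)
  then show ?thesis by simp
qed

lemma square_eq_of_diagonal_system:
  fixes k l f u v r w s :: "'a::field_char_0"
  assumes k: "k \<noteq> 0" and l: "l \<noteq> 0" and kl: "k + l \<noteq> 0"
    and linear: "k * f + 2*r*u + (-1 - 2*w) * v = 0"
    and square_k: "k^2 * f + 4*r^2*u + (-1 - 2*w)^2 * v = k"
    and square_l: "l^2 * f + (-1 - 2*r)^2*u + 4*w^2 * v = l"
    and sv: "s * v = k" and su: "s * u = l"
    and total: "f + u + v = 1" and weight: "(1 + k + l) * f = 1"
  shows "s = (2*r + 2*w + 1)^2"
proof -
  define N where "N = 1 + k + l"
  have Nf: "N * f = 1" using weight by (simp add: N_def)
  have "N * s = N * s * (f + u + v)" using total by simp
  also have "\<dots> = s * (N * f) + N * (s * u) + N * (s * v)" by (simp add: algebra_simps)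
  finally have "N * s = s + N * l + N * k" using Nf sv su by simp
  then have "(k + l) * (N - s) = 0" unfolding N_def by algebra
  then have sN: "s = N" using kl by simp
  have weights: "N * f = 1" "N * u = l" "N * v = k" using Nf sv su sN by auto
  have "N * (k * f + 2*r*u + (-1 - 2*w) * v) = k + 2*r*l + (-1 - 2*w) * k"
    using weights by algebra
  then have "2 * (r * l - w * k) = 0" using linear by algebra
  then have rw: "r * l = w * k" by simp
  have "N * (k^2 * f + 4*r^2*u + (-1 - 2*w)^2 * v) = k * (k + 4*r*w + (1 + 2*w)^2)"
    using weights rw by algebra
  then have c2: "k + 4*r*w + (1 + 2*w)^2 = N" using square_k k by (simp add: mult.commute)
  have "N * (l^2 * f + (-1 - 2*r)^2*u + 4*w^2 * v) = l * (l + 4*r*w + (1 + 2*r)^2)"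
    using weights rw by algebra
  then have d2: "l + 4*r*w + (1 + 2*r)^2 = N" using square_l l by (simp add: mult.commute)
  show ?thesis using c2 d2 sN unfolding N_def by algebra
qed

lemma digraph_eigenvalues_Un:
  assumes "orthogonal_idempotents d E" and "R \<inter> S = {}"
    and "\<And>j. j \<le> d \<Longrightarrow> adjm R ** E j = mat (a j) ** E j"
    and "\<And>j. j \<le> d \<Longrightarrow> adjm S ** E j = mat (b j) ** E j"
  shows "digraph_eigenvalues (R \<union> S) = (\<lambda>j. a j + b j) ` {..d}"
proof -
  interpret orthogonal_idempotents d E by (fact assms(1))
  have "adjm (R \<union> S) = lincomb (\<lambda>j. a j + b j)"
    using assms(3,4)
    by (intro eq_lincomb) (simp add: adjm_Un[OF assms(2)] matrix_add_rdistrib mat_mult_add)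
  then show ?thesis by (simp add: digraph_eigenvalues_def eigenvalues_lincomb)
qed

definition skew_table ::
  "real \<Rightarrow> real \<Rightarrow> complex \<Rightarrow> complex \<Rightarrow> complex \<Rightarrow> complex \<Rightarrow> nat \<Rightarrow> nat \<Rightarrow> complex" where
  "skew_table k1 k2 \<rho> \<sigma> \<tau> \<omega> j i =
     [[1, of_real (k1/2), of_real (k1/2), of_real (k2/2), of_real (k2/2)],
      [1, \<rho>, cnj \<rho>, \<tau>, cnj \<tau>],
      [1, \<sigma>, cnj \<sigma>, \<omega>, cnj \<omega>],
      [1, cnj \<sigma>, \<sigma>, cnj \<omega>, \<omega>],
      [1, cnj \<rho>, \<rho>, cnj \<tau>, \<tau>]] ! j ! i"

lemma le_4_cases: "j \<le> (4::nat) \<Longrightarrow> j = 0 \<or> j = 1 \<or> j = 2 \<or> j = 3 \<or> j = 4"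
  by auto

lemma sum_atMost_4: "(\<Sum>j\<le>(4::nat). f j) = f 0 + f 1 + f 2 + f 3 + (f 4 :: 'a::comm_monoid_add)"
  by (simp add: numeral_eq_Suc atMost_Suc algebra_simps)

lemma skew_table_swap:
  "j \<le> 4 \<Longrightarrow> skew_table k1 k2 \<rho> \<sigma> \<tau> \<omega> ([0,2,1,4,3] ! j) i = skew_table k1 k2 \<sigma> \<rho> \<omega> \<tau> j i"
  by (auto simp: skew_table_def dest!: le_4_cases)

lemma skew_table_eigenvalues:
  assumes "i \<in> {1, 2}"
  shows "(\<lambda>j. skew_table k1 k2 \<rho> \<sigma> \<tau> \<omega> j i + skew_table k1 k2 \<rho> \<sigma> \<tau> \<omega> j (i + 2)) ` {..4}
    = {of_real ((k1 + k2) / 2), \<rho> + \<tau>, \<sigma> + \<omega>, cnj (\<sigma> + \<omega>), cnj (\<rho> + \<tau>)}"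
proof -
  have atMost_4: "{..4::nat} = {0, 1, 2, 3, 4}" by auto
  from assms consider "i = 1" | "i = 2" by blast
  then show ?thesis
  proof cases
    case 1
    then show ?thesis by (simp add: atMost_4 skew_table_def add_divide_distrib)
  next
    case 2
    then show ?thesis by (simp add: atMost_4 skew_table_def add_divide_distrib insert_commute)
  qed
qed

locale skew_table_scheme =
  fixes R :: "nat \<Rightarrow> ('a::finite \<times> 'a) set" and E :: "nat \<Rightarrow> complex^'a^'a"
    and k1 k2 :: real and \<rho> \<sigma> \<tau> \<omega> :: complex
  assumes scheme: "assoc_scheme 4 R"
    and converse_R1: "(R 1)\<inverse> = R 2" and converse_R3: "(R 3)\<inverse> = R 4"
    and idempotents: "orthogonal_idempotents 4 E"
    and eigen: "i \<le> 4 \<Longrightarrow> j \<le> 4 \<Longrightarrow> adjm (R i) ** E j = mat (skew_table k1 k2 \<rho> \<sigma> \<tau> \<omega> j i) ** E j"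
    and valency_R12: "real (card {y. (x, y) \<in> R 1 \<union> R 2}) = k1"
    and valency_R34: "real (card {y. (x, y) \<in> R 3 \<union> R 4}) = k2"
begin

sublocale orthogonal_idempotents 4 E
  by (fact idempotents)

abbreviation P :: "nat \<Rightarrow> nat \<Rightarrow> complex" where
  "P \<equiv> skew_table k1 k2 \<rho> \<sigma> \<tau> \<omega>"

lemma adjm_eq_lincomb: "i \<le> 4 \<Longrightarrow> adjm (R i) = lincomb (\<lambda>j. P j i)"
  by (rule eq_lincomb) (rule eigen)

lemma adjm_diff_lincomb: "a \<le> 4 \<Longrightarrow> b \<le> 4 \<Longrightarrow> adjm (R a) - adjm (R b) = lincomb (\<lambda>j. P j a - P j b)"
  by (simp add: adjm_eq_lincomb lincomb_diff)

lemma adjm_diff_entry_1: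
  assumes "a \<le> 4" "b \<le> 4" "a \<noteq> b"
  obtains x y where "(adjm (R a) - adjm (R b)) $ x $ y = 1"
proof -
  obtain x y where "(x, y) \<in> R a" using assoc_scheme_nonempty[OF scheme assms(1)] by auto
  moreover have "(x, y) \<notin> R b" using assoc_scheme_disjoint[OF scheme assms] calculation by blast
  ultimately show ?thesis using that[of x y] by simp
qed

(* J commutes with the skew matrix A_a - A_b, hence annihilates it. *)
lemma row_sum_eq_0:
  assumes conv: "(R a)\<inverse> = R b" and ab: "a \<le> 4" "b \<le> 4" and j: "j \<le> 4" and "P j a \<noteq> P j b"
  shows "(\<Sum>i\<le>4. P j i) = 0"
proof -
  define J where "J = (\<Sum>i\<le>4. adjm (R i))"
  define S where "S = adjm (R a) - adjm (R b)"
  have J: "J = lincomb (\<lambda>j. \<Sum>i\<le>4. P j i)"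
    unfolding J_def by (simp add: adjm_eq_lincomb lincomb_sum)
  have S: "S = lincomb (\<lambda>j. P j a - P j b)"
    unfolding S_def using ab by (rule adjm_diff_lincomb)
  have "transpose S = - S"
    unfolding S_def by (auto simp: vec_eq_iff transpose_def simp flip: conv)
  moreover have "J ** S = S ** J" unfolding J S by (rule lincomb_mult_commute)
  moreover have "J $ x $ y = 1" for x y
    unfolding J_def by (rule assoc_scheme_sum_adjm[OF scheme])
  ultimately have "J ** S = 0" by (rule ones_mult_skew_eq_0)
  then have "lincomb (\<lambda>j. (\<Sum>i\<le>4. P j i) * (P j a - P j b)) = lincomb (\<lambda>_. 0)"
    by (simp add: J S lincomb_mult lincomb_zero)
  from lincomb_eqD[OF this j] show ?thesis using assms(5) by simp
qed

lemma Ints_of_skew_eigenvalue: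
  assumes ab: "a \<le> 4" "b \<le> 4" "a \<noteq> b" and M: "integral_matrix M" "M = lincomb c"
    and eig: "\<And>j. j \<le> 4 \<Longrightarrow> c j * (P j a - P j b) = \<mu> * (P j a - P j b)"
  shows "\<mu> \<in> \<int>"
proof -
  define S where "S = adjm (R a) - adjm (R b)"
  obtain x y where "S $ x $ y = 1" using adjm_diff_entry_1[OF ab] unfolding S_def .
  moreover have "integral_matrix S" by (simp add: S_def integral_matrix_diff integral_matrix_adjm)
  moreover have "M ** S = mat \<mu> ** S"
    unfolding S_def adjm_diff_lincomb[OF ab(1,2)] M(2) lincomb_mult mat_mult_lincomb
    by (rule lincomb_cong) (rule eig)
  ultimately show ?thesis using M(1) by (intro eigenvalue_Ints)
qed

definition Et1 :: "complex^'a^'a" where "Et1 = E 1 + E 4"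
definition Et2 :: "complex^'a^'a" where "Et2 = E 2 + E 3"

lemma lincomb_diag_symmetric:
  "c 4 = c 1 \<Longrightarrow> c 3 = c 2 \<Longrightarrow>
    lincomb c $ x $ x = c 0 * E 0 $ x $ x + c 1 * Et1 $ x $ x + c 2 * Et2 $ x $ x"
  by (simp add: lincomb_diag sum_atMost_4 Et1_def Et2_def algebra_simps)

lemma adjm_diag_eq_0: "1 \<le> i \<Longrightarrow> i \<le> 4 \<Longrightarrow> adjm (R i) $ x $ x = 0"
  using assoc_scheme_disjoint[OF scheme, of 0 i] assoc_scheme_Id[OF scheme] by auto

lemma diag_squares:
  assumes conv: "(R a)\<inverse> = R b" and ab: "a \<le> 4" "b \<le> 4" "a \<noteq> b"
    and valency: "\<And>x. real (card {y. (x, y) \<in> R a \<union> R b}) = k"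
  shows "lincomb (\<lambda>j. (P j a + P j b) * (P j a + P j b)) $ x $ x = of_real k"
    and "lincomb (\<lambda>j. (P j a - P j b) * (P j a - P j b)) $ x $ x = - of_real k"
proof -
  have disj: "R a \<inter> (R a)\<inverse> = {}"
    unfolding conv using scheme ab by (rule assoc_scheme_disjoint)
  have deg: "of_nat (card {y. (x, y) \<in> R a \<union> (R a)\<inverse>}) = (of_real k :: complex)"
    using arg_cong[OF valency[of x], of complex_of_real] unfolding conv by simp
  have "adjm (R a) + adjm (R b) = lincomb (\<lambda>j. P j a + P j b)"
    using ab by (simp add: adjm_eq_lincomb lincomb_add)
  then show "lincomb (\<lambda>j. (P j a + P j b) * (P j a + P j b)) $ x $ x = of_real k"
    using adjm_symmetric_square_diag[OF disj, of x] deg unfolding conv by (simp add: lincomb_mult)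
  have "adjm (R a) - adjm (R b) = lincomb (\<lambda>j. P j a - P j b)"
    using ab(1,2) by (rule adjm_diff_lincomb)
  then show "lincomb (\<lambda>j. (P j a - P j b) * (P j a - P j b)) $ x $ x = - of_real k"
    using adjm_skew_square_diag[OF disj, of x] deg unfolding conv by (simp add: lincomb_mult)
qed

lemma digraph_eigenvalues_R_Un_R_plus_2:
  assumes "i \<in> {1, 2}"
  shows "digraph_eigenvalues (R i \<union> R (i + 2))
    = {of_real ((k1 + k2) / 2), \<rho> + \<tau>, \<sigma> + \<omega>, cnj (\<sigma> + \<omega>), cnj (\<rho> + \<tau>)}"
proof -
  have "R i \<inter> R (i + 2) = {}"
    using assms assoc_scheme_disjoint[OF scheme, of i "i + 2"] by auto
  then have "digraph_eigenvalues (R i \<union> R (i + 2)) = (\<lambda>j. P j i + P j (i + 2)) ` {..4}"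
    using assms by (intro digraph_eigenvalues_Un[OF idempotents] eigen) auto
  also have "\<dots> = {of_real ((k1 + k2) / 2), \<rho> + \<tau>, \<sigma> + \<omega>, cnj (\<sigma> + \<omega>), cnj (\<rho> + \<tau>)}"
    using assms by (rule skew_table_eigenvalues)
  finally show ?thesis .
qed

lemma valencies_pos: "k1 > 0" "k2 > 0"
  using assoc_scheme_valency_pos[OF scheme, of 1 2 k1] valency_R12
    assoc_scheme_valency_pos[OF scheme, of 3 4 k2] valency_R34 by simp_all

lemma swap_idempotents: "skew_table_scheme R (\<lambda>j. E ([0,2,1,4,3] ! j)) k1 k2 \<sigma> \<rho> \<omega> \<tau>"
proof -
  have swap_le: "[0,2,1,4,3] ! j \<le> (4::nat)" if "j \<le> 4" for j
    using that by (auto dest!: le_4_cases)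
  have "bij_betw (\<lambda>j. [0,2,1,4,3::nat] ! j) {..4} {..4}"
    by (rule bij_betw_byWitness[where f' = "\<lambda>j. [0,2,1,4,3] ! j"]) (auto dest!: le_4_cases)
  then have "orthogonal_idempotents 4 (\<lambda>j. E ([0,2,1,4,3] ! j))"
    by (rule reindex)
  moreover have "adjm (R i) ** E ([0,2,1,4,3] ! j)
      = mat (skew_table k1 k2 \<sigma> \<rho> \<omega> \<tau> j i) ** E ([0,2,1,4,3] ! j)"
    if "i \<le> 4" "j \<le> 4" for i j
    using eigen[OF that(1) swap_le[OF that(2)]] skew_table_swap[OF that(2)] by simp
  ultimately show ?thesis
    using scheme converse_R1 converse_R3 valency_R12 valency_R34 by (intro skew_table_scheme.intro)
qed

end

(* The shape of a type 1 table: only the reality of rho, omega and the non-reality of sigma, tau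
   are used, not the explicit values of the imaginary parts. *)
locale type1_scheme = skew_table_scheme +
  assumes rho_real: "cnj \<rho> = \<rho>" and omega_real: "cnj \<omega> = \<omega>"
    and sigma_nonreal: "cnj \<sigma> \<noteq> \<sigma>" and tau_nonreal: "cnj \<tau> \<noteq> \<tau>"
begin

lemma row_sum_nontrivial_eq_0:
  assumes "1 \<le> j" "j \<le> 4"
  shows "(\<Sum>i\<le>4. P j i) = 0"
proof -
  consider "j = 1 \<or> j = 4" | "j = 2 \<or> j = 3" using assms by linarith
  then show ?thesis
  proof cases
    case 1
    show ?thesis
      by (rule row_sum_eq_0[OF converse_R3]) (use 1 tau_nonreal in \<open>auto simp: skew_table_def\<close>)
  next
    case 2
    show ?thesis
      by (rule row_sum_eq_0[OF converse_R1]) (use 2 sigma_nonreal in \<open>auto simp: skew_table_def\<close>)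
  qed
qed

lemma column_sum_relations: "\<tau> + cnj \<tau> = -1 - 2*\<rho>" "\<sigma> + cnj \<sigma> = -1 - 2*\<omega>"
  using row_sum_nontrivial_eq_0[of 1] row_sum_nontrivial_eq_0[of 2]
  by (simp_all add: sum_atMost_4 skew_table_def rho_real omega_real) algebra+

lemma Ints_rho: "\<rho> \<in> \<int>"
proof (rule Ints_of_skew_eigenvalue)
  show "adjm (R 1) = lincomb (\<lambda>j. P j 1)" by (simp add: adjm_eq_lincomb)
  show "P j 1 * (P j 3 - P j 4) = \<rho> * (P j 3 - P j 4)" if "j \<le> 4" for j
    using that by (auto simp: skew_table_def rho_real omega_real dest!: le_4_cases)
qed (simp_all add: integral_matrix_adjm)

lemma Ints_omega: "\<omega> \<in> \<int>"
proof (rule Ints_of_skew_eigenvalue)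
  show "adjm (R 3) = lincomb (\<lambda>j. P j 3)" by (simp add: adjm_eq_lincomb)
  show "P j 3 * (P j 1 - P j 2) = \<omega> * (P j 1 - P j 2)" if "j \<le> 4" for j
    using that by (auto simp: skew_table_def rho_real omega_real dest!: le_4_cases)
qed (simp_all add: integral_matrix_adjm)

lemma Ints_norm_sigma: "\<sigma> * cnj \<sigma> \<in> \<int>"
proof (rule Ints_of_skew_eigenvalue)
  show "adjm (R 1) ** adjm (R 2) = lincomb (\<lambda>j. P j 1 * P j 2)"
    by (simp add: adjm_eq_lincomb lincomb_mult)
  show "P j 1 * P j 2 * (P j 1 - P j 2) = \<sigma> * cnj \<sigma> * (P j 1 - P j 2)" if "j \<le> 4" for j
    using that by (auto simp: skew_table_def rho_real omega_real dest!: le_4_cases)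
qed (simp_all add: integral_matrix_adjm integral_matrix_mult)

lemma diagonal_relations_R12:
  "of_real k1 * E 0 $ x $ x + 2*\<rho> * Et1 $ x $ x + (\<sigma> + cnj \<sigma>) * Et2 $ x $ x = 0"
  "of_real k1^2 * E 0 $ x $ x + 4*\<rho>^2 * Et1 $ x $ x + (\<sigma> + cnj \<sigma>)^2 * Et2 $ x $ x = of_real k1"
  "(\<sigma> - cnj \<sigma>)^2 * Et2 $ x $ x = - of_real k1"
proof -
  have sum: "lincomb (\<lambda>j. P j 1 + P j 2) = adjm (R 1) + adjm (R 2)"
    by (simp add: adjm_eq_lincomb lincomb_add)
  have "lincomb (\<lambda>j. P j 1 + P j 2) $ x $ x = 0"
    unfolding sum using adjm_diag_eq_0[of 1 x] adjm_diag_eq_0[of 2 x] by simp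
  then show "of_real k1 * E 0 $ x $ x + 2*\<rho> * Et1 $ x $ x + (\<sigma> + cnj \<sigma>) * Et2 $ x $ x = 0"
    by (subst (asm) lincomb_diag_symmetric) (simp_all add: skew_table_def rho_real add.commute)
  have "(1::nat) \<le> 4" "(2::nat) \<le> 4" "(1::nat) \<noteq> 2" by simp_all
  note squares = diag_squares[OF converse_R1 this valency_R12, of x]
  from squares(1) show "of_real k1^2 * E 0 $ x $ x + 4*\<rho>^2 * Et1 $ x $ x
      + (\<sigma> + cnj \<sigma>)^2 * Et2 $ x $ x = of_real k1"
    by (subst (asm) lincomb_diag_symmetric)
      (simp_all add: skew_table_def rho_real add.commute power2_eq_square)
  from squares(2) show "(\<sigma> - cnj \<sigma>)^2 * Et2 $ x $ x = - of_real k1"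
    by (subst (asm) lincomb_diag_symmetric)
      (simp_all add: skew_table_def rho_real power2_eq_square algebra_simps)
qed

lemma diagonal_relations_R34:
  "of_real k2^2 * E 0 $ x $ x + (\<tau> + cnj \<tau>)^2 * Et1 $ x $ x + 4*\<omega>^2 * Et2 $ x $ x = of_real k2"
  "(\<tau> - cnj \<tau>)^2 * Et1 $ x $ x = - of_real k2"
proof -
  have "(3::nat) \<le> 4" "(4::nat) \<le> 4" "(3::nat) \<noteq> 4" by simp_all
  note squares = diag_squares[OF converse_R3 this valency_R34, of x]
  from squares(1) show "of_real k2^2 * E 0 $ x $ x + (\<tau> + cnj \<tau>)^2 * Et1 $ x $ x
      + 4*\<omega>^2 * Et2 $ x $ x = of_real k2"
    by (subst (asm) lincomb_diag_symmetric)
      (simp_all add: skew_table_def omega_real add.commute power2_eq_square)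
  from squares(2) show "(\<tau> - cnj \<tau>)^2 * Et1 $ x $ x = - of_real k2"
    by (subst (asm) lincomb_diag_symmetric)
      (simp_all add: skew_table_def omega_real power2_eq_square algebra_simps)
qed

lemma diagonal_relations_trace:
  "E 0 $ x $ x + Et1 $ x $ x + Et2 $ x $ x = 1"
  "(1 + of_real k1 + of_real k2) * E 0 $ x $ x = 1"
proof -
  have "lincomb (\<lambda>_. 1) $ x $ x = 1" by (simp add: lincomb_one mat_def)
  then show "E 0 $ x $ x + Et1 $ x $ x + Et2 $ x $ x = 1"
    by (subst (asm) lincomb_diag_symmetric) simp_all
  define row where "row = (\<lambda>j. \<Sum>i\<le>4. P j i)"
  have "(\<Sum>i\<le>4. adjm (R i)) = lincomb row"
    by (simp add: row_def adjm_eq_lincomb lincomb_sum)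
  then have "lincomb row $ x $ x = 1"
    using assoc_scheme_sum_adjm[OF scheme] by metis
  moreover have "row 0 = 1 + of_real k1 + of_real k2"
    by (simp add: row_def sum_atMost_4 skew_table_def)
  moreover have "row j = 0" if "1 \<le> j" "j \<le> 4" for j
    unfolding row_def using that by (rule row_sum_nontrivial_eq_0)
  ultimately show "(1 + of_real k1 + of_real k2) * E 0 $ x $ x = 1"
    by (simp add: lincomb_diag sum_atMost_4)
qed

lemma Im_sigma_neq_Im_tau: "Im \<sigma> \<noteq> Im \<tau>"
proof
  assume Im_eq: "Im \<sigma> = Im \<tau>"
  define s2 :: complex where "s2 = of_real (4 * (Im \<sigma>)^2)"
  have conj_diff: "z - cnj z = 2 * \<i> * of_real (Im z)" for z :: complex
    by (simp add: complex_eq_iff)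
  have s2_sigma: "(\<sigma> - cnj \<sigma>)^2 = - s2" and s2_tau: "(\<tau> - cnj \<tau>)^2 = - s2"
    unfolding conj_diff s2_def Im_eq by (simp_all add: power_mult_distrib)
  obtain x :: 'a where True by blast
  have s2_eq: "s2 = (2*\<rho> + 2*\<omega> + 1)^2"
  proof (rule square_eq_of_diagonal_system[where k = "of_real k1" and l = "of_real k2"
        and f = "E 0 $ x $ x" and u = "Et1 $ x $ x" and v = "Et2 $ x $ x"])
    show "complex_of_real k1 \<noteq> 0" "complex_of_real k2 \<noteq> 0" "of_real k1 + of_real k2 \<noteq> (0::complex)"
      using valencies_pos by (simp_all flip: of_real_add)
    show "of_real k1 * E 0 $ x $ x + 2*\<rho> * Et1 $ x $ x + (-1 - 2*\<omega>) * Et2 $ x $ x = 0"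
      "(of_real k1)^2 * E 0 $ x $ x + 4*\<rho>^2 * Et1 $ x $ x + (-1 - 2*\<omega>)^2 * Et2 $ x $ x = of_real k1"
      using diagonal_relations_R12[of x] by (simp_all flip: column_sum_relations)
    show "(of_real k2)^2 * E 0 $ x $ x + (-1 - 2*\<rho>)^2 * Et1 $ x $ x + 4*\<omega>^2 * Et2 $ x $ x
        = of_real k2"
      using diagonal_relations_R34(1)[of x] by (simp flip: column_sum_relations)
    show "s2 * Et2 $ x $ x = of_real k1"
      using diagonal_relations_R12(3)[of x] s2_sigma by simp
    show "s2 * Et1 $ x $ x = of_real k2"
      using diagonal_relations_R34(2)[of x] s2_tau by simp
    show "E 0 $ x $ x + Et1 $ x $ x + Et2 $ x $ x = 1"
      "(1 + of_real k1 + of_real k2) * E 0 $ x $ x = 1"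
      by (rule diagonal_relations_trace)+
  qed
  have "4 * (\<sigma> * cnj \<sigma>) = (\<sigma> + cnj \<sigma>)^2 - (\<sigma> - cnj \<sigma>)^2"
    by algebra
  also have "\<dots> = (2*\<omega> + 1)^2 + (2*(\<rho> + \<omega>) + 1)^2"
    unfolding column_sum_relations(2) s2_sigma s2_eq by algebra
  finally have norm_sigma: "4 * (\<sigma> * cnj \<sigma>) = (2*\<omega> + 1)^2 + (2*(\<rho> + \<omega>) + 1)^2" .
  obtain a b q :: int where abq: "\<rho> = of_int a" "\<omega> = of_int b" "\<sigma> * cnj \<sigma> = of_int q"
    using Ints_rho Ints_omega Ints_norm_sigma by (metis Ints_cases)
  have "of_int (4 * q) = (of_int ((2*b + 1)^2 + (2*(a + b) + 1)^2) :: complex)"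
    using norm_sigma unfolding abq by simp
  then have "(2*b + 1)^2 + (2*(a + b) + 1)^2 = 4 * q"
    by (simp only: of_int_eq_iff)
  then show False using odd_squares_sum_neq_4_mult by blast
qed

end

lemma (in skew_table_scheme) Im_eigenvalues:
  assumes "cnj \<rho> = \<rho> \<and> cnj \<omega> = \<omega> \<and> Im \<sigma> > 0 \<and> Im \<tau> > 0 \<or>
      cnj \<sigma> = \<sigma> \<and> cnj \<tau> = \<tau> \<and> Im \<rho> > 0 \<and> Im \<omega> > 0"
  shows "Im (\<rho> + \<tau>) > 0 \<and> Im (\<sigma> + \<omega>) > 0 \<and> Im (\<rho> + \<tau>) \<noteq> Im (\<sigma> + \<omega>)"
proof -
  have real_iff: "cnj z = z \<longleftrightarrow> Im z = 0" for z by (simp add: complex_eq_iff)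
  from assms consider
    (type1) "cnj \<rho> = \<rho>" "cnj \<omega> = \<omega>" "Im \<sigma> > 0" "Im \<tau> > 0" |
    (type2) "cnj \<sigma> = \<sigma>" "cnj \<tau> = \<tau>" "Im \<rho> > 0" "Im \<omega> > 0"
    by blast
  then show ?thesis
  proof cases
    case type1
    then have "type1_scheme R E k1 k2 \<rho> \<sigma> \<tau> \<omega>"
      using skew_table_scheme_axioms
      by (intro type1_scheme.intro type1_scheme_axioms.intro) (auto simp: real_iff)
    then have "Im \<sigma> \<noteq> Im \<tau>" by (rule type1_scheme.Im_sigma_neq_Im_tau)
    with type1 show ?thesis by (auto simp: real_iff)
  next
    case type2
    then have "type1_scheme R (\<lambda>j. E ([0,2,1,4,3] ! j)) k1 k2 \<sigma> \<rho> \<omega> \<tau>"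
      using swap_idempotents
      by (intro type1_scheme.intro type1_scheme_axioms.intro) (auto simp: real_iff)
    then have "Im \<rho> \<noteq> Im \<omega>" by (rule type1_scheme.Im_sigma_neq_Im_tau)
    with type2 show ?thesis by (auto simp: real_iff)
  qed
qed

lemma orthogonal_idempotents_prim_idempotents_table:
  "prim_idempotents_table R E P \<Longrightarrow> orthogonal_idempotents 4 E"
  unfolding prim_idempotents_table_def by unfold_locales blast+

lemma table_type_1_or_2_cases:
  fixes R :: "nat \<Rightarrow> ('a::finite \<times> 'a) set"
  assumes scheme: "assoc_scheme 4 R" and conv: "(R 1)\<inverse> = R 2" "(R 3)\<inverse> = R 4"
    and "table_type_1_or_2 R"
  obtains E k1 k2 \<rho> \<sigma> \<tau> \<omega> where "skew_table_scheme R E k1 k2 \<rho> \<sigma> \<tau> \<omega>"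
    and "cnj \<rho> = \<rho> \<and> cnj \<omega> = \<omega> \<and> Im \<sigma> > 0 \<and> Im \<tau> > 0 \<or>
         cnj \<sigma> = \<sigma> \<and> cnj \<tau> = \<tau> \<and> Im \<rho> > 0 \<and> Im \<omega> > 0"
proof -
  obtain E \<rho> \<sigma> \<tau> \<omega> and k1 k2 r1 t1 r2 t2 :: real where
    val1: "\<forall>x. real (card {y. (x, y) \<in> R 1 \<union> R 2}) = k1" and
    val2: "\<forall>x. real (card {y. (x, y) \<in> R 3 \<union> R 4}) = k2" and
    prim: "prim_idempotents_table R E (skew_table k1 k2 \<rho> \<sigma> \<tau> \<omega>)" and
    type: "\<rho> = of_real (r1 / 2) \<and>
      \<sigma> = (of_real r2 + \<i> * of_real (sqrt (real CARD('a) * k1 / real (rank (E 2 + E 3))))) / 2 \<and>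
      \<tau> = (of_real t1 + \<i> * of_real (sqrt (real CARD('a) * k2 / real (rank (E 1 + E 4))))) / 2 \<and>
      \<omega> = of_real (t2 / 2) \<or>
      \<rho> = (of_real r1 + \<i> * of_real (sqrt (real CARD('a) * k1 / real (rank (E 1 + E 4))))) / 2 \<and>
      \<sigma> = of_real (r2 / 2) \<and>
      \<tau> = of_real (t1 / 2) \<and>
      \<omega> = (of_real t2 + \<i> * of_real (sqrt (real CARD('a) * k2 / real (rank (E 2 + E 3))))) / 2"
    using assms(4) unfolding table_type_1_or_2_def Let_def skew_table_def[abs_def] by blast
  have idem: "orthogonal_idempotents 4 E"
    using prim by (rule orthogonal_idempotents_prim_idempotents_table)
  have "k1 > 0" "k2 > 0"
    using assoc_scheme_valency_pos[OF scheme, of 1 2 k1] val1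
      assoc_scheme_valency_pos[OF scheme, of 3 4 k2] val2 by simp_all
  moreover have "rank (E 1 + E 4) > 0" "rank (E 2 + E 3) > 0"
    using orthogonal_idempotents.add_nonzero[OF idem] by (simp_all add: rank_pos)
  ultimately have "sqrt (real CARD('a) * k1 / real (rank (E 1 + E 4))) > 0"
    "sqrt (real CARD('a) * k2 / real (rank (E 1 + E 4))) > 0"
    "sqrt (real CARD('a) * k1 / real (rank (E 2 + E 3))) > 0"
    "sqrt (real CARD('a) * k2 / real (rank (E 2 + E 3))) > 0"
    by simp_all
  with type have "cnj \<rho> = \<rho> \<and> cnj \<omega> = \<omega> \<and> Im \<sigma> > 0 \<and> Im \<tau> > 0 \<or>
      cnj \<sigma> = \<sigma> \<and> cnj \<tau> = \<tau> \<and> Im \<rho> > 0 \<and> Im \<omega> > 0"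
    by (elim disjE conjE; hypsubst_thin; simp)
  moreover have "skew_table_scheme R E k1 k2 \<rho> \<sigma> \<tau> \<omega>"
    using scheme conv idem prim val1 val2 unfolding prim_idempotents_table_def
    by (intro skew_table_scheme.intro) auto
  ultimately show ?thesis using that by blast
qed

theorem proposition4p2:
  fixes R :: "nat \<Rightarrow> ('a::finite \<times> 'a) set"
  assumes "assoc_scheme 4 R"
    and "skew_symmetric 4 R"
    and "(R 1)\<inverse> = R 2"
    and "(R 3)\<inverse> = R 4"
    and "table_type_1_or_2 R"
  shows "\<forall>i\<in>{1, 2::nat}. card (digraph_eigenvalues (R i \<union> R (i + 2))) = 5"
proof
  obtain E k1 k2 \<rho> \<sigma> \<tau> \<omega> where table: "skew_table_scheme R E k1 k2 \<rho> \<sigma> \<tau> \<omega>"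
    and type: "cnj \<rho> = \<rho> \<and> cnj \<omega> = \<omega> \<and> Im \<sigma> > 0 \<and> Im \<tau> > 0 \<or>
      cnj \<sigma> = \<sigma> \<and> cnj \<tau> = \<tau> \<and> Im \<rho> > 0 \<and> Im \<omega> > 0"
    using table_type_1_or_2_cases[OF assms(1,3,4,5)] by blast
  fix i :: nat
  assume "i \<in> {1, 2}"
  then show "card (digraph_eigenvalues (R i \<union> R (i + 2))) = 5"
    using skew_table_scheme.digraph_eigenvalues_R_Un_R_plus_2[OF table]
      skew_table_scheme.Im_eigenvalues[OF table type]
      card_conjugate_pairs[of "of_real ((k1 + k2) / 2)" "\<rho> + \<tau>" "\<sigma> + \<omega>"]
    by simp
qed

end
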